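(* Let $T,S:X\rightrightarrows X^*$ be pseudomonotone operators with $T\subset S$. If $T$ is pre-maximal pseudomonotone, then $S$ is pre-maximal pseudomonotone and $T^\rho=S^\rho$.
   Context: $X$ is a real Banach space with dual $X^*$ and pairing $\langle x,x^*\rangle=x^*(x)$. A multivalued operator $T:X\rightrightarrows X^*$ is identified with its graph $T\subset X\times X^*$. For $(x,x^* ),(y,y^* )\in X\times X^*$, write $(x,x^* )\sim_p(y,y^* )$ if either $\min\{\langle x-y,y^*\rangle,\langle y-x,x^*\rangle\}<0$ or $\langle x-y,y^*\rangle=\langle y-x,x^*\rangle=0$. The pseudomonotone polar of $T$ is $T^\rho=\{(x,x^* )\in X\times X^*: (x,x^* )\sim_p(y,y^* )\ \forall (y,y^* )\in T\}$. $T$ is pseudomonotone if for all $(x,x^* ),(y,y^* )\in T$, $\langle y-x,x^*\rangle\ge0$ implies $\langle y-x,y^*\rangle\ge0$. $T$ is pre-maximal pseudomonotone if both $T$ and $T^\rho$ are pseudomonotone. *)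

theory Defs
  imports "HOL-Analysis.Analysis"
begin

text \<open>A multivalued operator is identified with its graph, a subset of X \<times> X*.\<close>

definition pairing :: "'a::banach \<Rightarrow> ('a \<Rightarrow>\<^sub>L real) \<Rightarrow> real" where
  "pairing x xs = blinfun_apply xs x"

definition prel :: "('a::banach \<times> ('a \<Rightarrow>\<^sub>L real)) \<Rightarrow> ('a \<times> ('a \<Rightarrow>\<^sub>L real)) \<Rightarrow> bool" where
  "prel p q = (let (x, xs) = p; (y, ys) = q in
     min (pairing (x - y) ys) (pairing (y - x) xs) < 0 \<or>
     (pairing (x - y) ys = 0 \<and> pairing (y - x) xs = 0))"

definition ppolar :: "('a::banach \<times> ('a \<Rightarrow>\<^sub>L real)) set \<Rightarrow> ('a \<times> ('a \<Rightarrow>\<^sub>L real)) set" where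
  "ppolar T = {p. \<forall>q\<in>T. prel p q}"

definition pseudomonotone :: "('a::banach \<times> ('a \<Rightarrow>\<^sub>L real)) set \<Rightarrow> bool" where
  "pseudomonotone T = (\<forall>x xs y ys. (x, xs) \<in> T \<longrightarrow> (y, ys) \<in> T \<longrightarrow>
     pairing (y - x) xs \<ge> 0 \<longrightarrow> pairing (y - x) ys \<ge> 0)"

definition pre_maximal_pseudomonotone :: "('a::banach \<times> ('a \<Rightarrow>\<^sub>L real)) set \<Rightarrow> bool" where
  "pre_maximal_pseudomonotone T = (pseudomonotone T \<and> pseudomonotone (ppolar T))"

end

theory Submission
  imports Defs
begin

text \<open>Any two elements of a pseudomonotone set are related by \<open>\<sim>\<^sub>p\<close>, so a pseudomonotone
  \<open>S \<supseteq> T\<close> lies in \<open>T\<^sup>\<rho>\<close>. Every element of \<open>T\<^sup>\<rho>\<close> is then related to every element of \<open>S\<close>,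
  because \<open>T\<^sup>\<rho>\<close> is pseudomonotone; hence \<open>T\<^sup>\<rho> \<subseteq> S\<^sup>\<rho>\<close>, and the reverse inclusion is
  antitonicity of the polar.\<close>

lemma pairing_minus_commute: "pairing (x - y) xs = - pairing (y - x) xs"
  unfolding pairing_def by (simp add: blinfun.diff_right)

lemma pseudomonotone_prel:
  assumes "pseudomonotone A" and "p \<in> A" and "q \<in> A"
  shows "prel p q"
proof -
  obtain x xs y ys where pq: "p = (x, xs)" "q = (y, ys)" by fastforce
  have "pairing (y - x) xs \<ge> 0 \<longrightarrow> pairing (y - x) ys \<ge> 0"
    and "pairing (x - y) ys \<ge> 0 \<longrightarrow> pairing (x - y) xs \<ge> 0"
    using assms unfolding pq pseudomonotone_def by blast+
  then show ?thesis
    unfolding pq prel_def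
    using pairing_minus_commute[of x y ys] pairing_minus_commute[of x y xs]
    by (auto simp: min_def)
qed

lemma pseudomonotone_subset_ppolar:
  assumes "pseudomonotone A" and "B \<subseteq> A"
  shows "A \<subseteq> ppolar B"
  using assms pseudomonotone_prel unfolding ppolar_def by blast

lemma ppolar_antimono: "A \<subseteq> B \<Longrightarrow> ppolar B \<subseteq> ppolar A"
  unfolding ppolar_def by blast

lemma ppolar_eq_if_subset_ppolar:
  assumes "pseudomonotone (ppolar T)" and "T \<subseteq> S" and "S \<subseteq> ppolar T"
  shows "ppolar S = ppolar T"
proof
  show "ppolar S \<subseteq> ppolar T" using \<open>T \<subseteq> S\<close> by (rule ppolar_antimono)
  show "ppolar T \<subseteq> ppolar S"
    using pseudomonotone_subset_ppolar[OF assms(1,3)] .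
qed

theorem mainTheorem11:
  fixes T S :: "('a::banach \<times> ('a \<Rightarrow>\<^sub>L real)) set"
  assumes "pseudomonotone T" and "pseudomonotone S" and "T \<subseteq> S"
    and "pre_maximal_pseudomonotone T"
  shows "pre_maximal_pseudomonotone S \<and> ppolar T = ppolar S"
proof -
  have polar_T: "pseudomonotone (ppolar T)"
    using assms(4) unfolding pre_maximal_pseudomonotone_def by blast
  have "ppolar S = ppolar T"
    using polar_T assms(3) pseudomonotone_subset_ppolar[OF assms(2,3)]
    by (rule ppolar_eq_if_subset_ppolar)
  then show ?thesis
    using polar_T assms(2) unfolding pre_maximal_pseudomonotone_def by simp
qed

end
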